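(* (i) There exists a regular curve in $\mathbb{E}^4$ which admits a generalized Bishop frame of type C but does not admit a generalized Bishop frame of type D. (ii) There exists a regular curve in $\mathbb{E}^4$ which does not admit a generalized Bishop frame of type C.
   Context: A regular curve $\gamma: I\to\mathbb{E}^4$ ($I$ an open interval) is considered with arc-length parametrization; $\mathbb{T}=\gamma'$ is its unit tangent vector. A frame on $\gamma$ is an ordered orthonormal frame $(\mathbb{T},\mathbb{Z}_1,\mathbb{Z}_2,\mathbb{Z}_3)$ of smooth vector fields along $\gamma$ whose first vector is $\mathbb{T}$; it is identified with the smooth map $\mathbb{Z}: I\to O(4)$ whose rows are these vectors. Its coefficient matrix is the $\mathfrak{o}(4)$-valued function $X$ with $\mathbb{Z}'=X\mathbb{Z}$. A frame is of type B, C, D, F respectively if, after possibly permuting $\mathbb{Z}_1,\mathbb{Z}_2,\mathbb{Z}_3$ (keeping $\mathbb{T}$ first), its coefficient matrix has the respective form, for some smooth functions $x_1,x_2,x_3$ (no sign conditions): Type B: $\begin{pmatrix}0&x_1&x_2&x_3\\-x_1&0&0&0\\-x_2&0&0&0\\-x_3&0&0&0\end{pmatrix}$; Type C: $\begin{pmatrix}0&x_1&x_2&0\\-x_1&0&0&x_3\\-x_2&0&0&0\\0&-x_3&0&0\end{pmatrix}$; Type D: $\begin{pmatrix}0&x_1&0&0\\-x_1&0&x_2&x_3\\0&-x_2&0&0\\0&-x_3&0&0\end{pmatrix}$; Type F: $\begin{pmatrix}0&x_1&0&0\\-x_1&0&x_2&0\\0&-x_2&0&x_3\\0&0&-x_3&0\end{pmatrix}$.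 A curve admits a frame of a given type if such a frame exists along it. *)

theory Defs
  imports "HOL-Analysis.Analysis"
begin

definition smooth_on :: "real set \<Rightarrow> (real \<Rightarrow> 'a::real_normed_vector) \<Rightarrow> bool" where
  "smooth_on I f \<longleftrightarrow>
     (\<exists>D. D 0 = f \<and> (\<forall>n. \<forall>t\<in>I. (D n has_vector_derivative D (Suc n) t) (at t)))"

definition unit_speed_curve :: "real set \<Rightarrow> (real \<Rightarrow> real^4) \<Rightarrow> bool" where
  "unit_speed_curve I \<gamma> \<longleftrightarrow>
     open I \<and> is_interval I \<and> I \<noteq> {} \<and> smooth_on I \<gamma> \<and>
     (\<forall>t\<in>I. norm (vector_derivative \<gamma> (at t)) = 1)"

text \<open>A frame on the curve: smooth map into O(4) (rows = frame vectors, row 1 = T).\<close>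
definition frame_on :: "real set \<Rightarrow> (real \<Rightarrow> real^4) \<Rightarrow> (real \<Rightarrow> real^4^4) \<Rightarrow> bool" where
  "frame_on I \<gamma> Z \<longleftrightarrow> smooth_on I Z \<and>
     (\<forall>t\<in>I. orthogonal_matrix (Z t) \<and> Z t $ 1 = vector_derivative \<gamma> (at t))"

text \<open>Coefficient matrix shapes (rows/columns indexed T, Z1, Z2, Z3).\<close>
definition shape_B :: "real \<Rightarrow> real \<Rightarrow> real \<Rightarrow> real^4^4" where
  "shape_B x1 x2 x3 = vector [vector [0, x1, x2, x3], vector [-x1, 0, 0, 0],
                              vector [-x2, 0, 0, 0], vector [-x3, 0, 0, 0]]"
definition shape_C :: "real \<Rightarrow> real \<Rightarrow> real \<Rightarrow> real^4^4" where
  "shape_C x1 x2 x3 = vector [vector [0, x1, x2, 0], vector [-x1, 0, 0, x3],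
                              vector [-x2, 0, 0, 0], vector [0, -x3, 0, 0]]"
definition shape_D :: "real \<Rightarrow> real \<Rightarrow> real \<Rightarrow> real^4^4" where
  "shape_D x1 x2 x3 = vector [vector [0, x1, 0, 0], vector [-x1, 0, x2, x3],
                              vector [0, -x2, 0, 0], vector [0, -x3, 0, 0]]"
definition shape_F :: "real \<Rightarrow> real \<Rightarrow> real \<Rightarrow> real^4^4" where
  "shape_F x1 x2 x3 = vector [vector [0, x1, 0, 0], vector [-x1, 0, x2, 0],
                              vector [0, -x2, 0, x3], vector [0, 0, -x3, 0]]"

text \<open>The curve admits a frame of the type given by shape M: a frame Z and a permutation
  \<sigma> of the indices fixing the first (T) one such that the permuted frame
  (T, Z_{\<sigma> 2}, Z_{\<sigma> 3}, Z_{\<sigma> 4}) has coefficient matrix M(x1,x2,x3) for smooth x1,x2,x3,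
  i.e. its derivative equals M(x1 t, x2 t, x3 t) times itself.\<close>
definition admits_frame_type ::
  "real set \<Rightarrow> (real \<Rightarrow> real^4) \<Rightarrow> (real \<Rightarrow> real \<Rightarrow> real \<Rightarrow> real^4^4) \<Rightarrow> bool" where
  "admits_frame_type I \<gamma> M \<longleftrightarrow>
     (\<exists>Z \<sigma> x1 x2 x3. frame_on I \<gamma> Z \<and> \<sigma> permutes (UNIV :: 4 set) \<and> \<sigma> 1 = 1 \<and>
        smooth_on I x1 \<and> smooth_on I x2 \<and> smooth_on I x3 \<and>
        (\<forall>t\<in>I. ((\<lambda>s. \<chi> i. Z s $ \<sigma> i) has_vector_derivative
                   (M (x1 t) (x2 t) (x3 t) ** (\<chi> i. Z t $ \<sigma> i))) (at t)))"

end

theory Submission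
  imports Defs
begin

text \<open>On \<open>[j, j + 1]\<close> the unit tangent of the example curve turns away from \<open>e\<^sub>1\<close> and back by a
  smooth bump angle in the plane of \<open>e\<^sub>1\<close> and \<open>e\<^sub>a\<close>, where \<open>a = 2, 3, 4, 2\<close> for \<open>j = 0, 1, 2, 3\<close>;
  at the knots \<open>0, ..., 4\<close> it equals \<open>e\<^sub>1\<close>.

  On \<open>(0, 2)\<close> the tangent together with the normals of the first two rotations and \<open>e\<^sub>4\<close> is a
  frame of type C. A frame of type D would have \<open>Z\<^sub>1\<close> parallel to \<open>T'\<close> wherever \<open>T' \<noteq> 0\<close>, so by
  continuity \<open>Z\<^sub>1(1)\<close> would lie in both \<open>span {e\<^sub>1, e\<^sub>2}\<close> and \<open>span {e\<^sub>1, e\<^sub>3}\<close> while being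
  orthogonal to \<open>T(1) = e\<^sub>1\<close>.

  On \<open>(0, 4)\<close> a frame of type C is impossible: \<open>Z\<^sub>3\<close> is orthogonal to \<open>T\<close> and \<open>T'\<close>, which pins it to
  \<open>\<plusminus>e\<^sub>4, \<plusminus>e\<^sub>2, \<plusminus>e\<^sub>3\<close> at the knots \<open>1, 2, 3\<close>. Since \<open>Z\<^sub>2' = -x\<^sub>2 T\<close> and \<open>T\<close> has no \<open>e\<^sub>4\<close>-component on
  \<open>[1, 2]\<close> and no \<open>e\<^sub>3\<close>-component on \<open>[2, 3]\<close>, the unit vector \<open>Z\<^sub>2(2)\<close> would be orthogonal to all
  of \<open>e\<^sub>1, ..., e\<^sub>4\<close>.\<close>

subsection \<open>Vector-valued derivatives\<close>

lemma has_vector_derivative_vec_lambda: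
  fixes f :: "real \<Rightarrow> 'a::real_normed_vector^'n"
  assumes "\<And>i. ((\<lambda>s. f s $ i) has_vector_derivative f' $ i) (at t within S)"
  shows "(f has_vector_derivative f') (at t within S)"
proof -
  have "((\<lambda>y. \<chi> i. (f y $ i - f t $ i - (y - t) *\<^sub>R f' $ i) /\<^sub>R norm (y - t)) \<longlongrightarrow> (\<chi> i. 0))
      (at t within S)"
    using assms unfolding has_vector_derivative_def has_derivative_at_within
    by (intro tendsto_vec_lambda) auto
  moreover have "(\<lambda>y. \<chi> i. (f y $ i - f t $ i - (y - t) *\<^sub>R f' $ i) /\<^sub>R norm (y - t))
      = (\<lambda>y. (f y - f t - (y - t) *\<^sub>R f') /\<^sub>R norm (y - t))" "(\<chi> i. 0) = (0 :: 'a^'n)"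
    by (simp_all add: vec_eq_iff fun_eq_iff)
  ultimately have "((\<lambda>y. (f y - f t - (y - t) *\<^sub>R f') /\<^sub>R norm (y - t)) \<longlongrightarrow> 0) (at t within S)"
    by (simp only:)
  then show ?thesis
    unfolding has_vector_derivative_def has_derivative_at_within
    by (auto intro: bounded_linear_scaleR_left)
qed

lemma has_vector_derivative_vec_nth:
  "(f has_vector_derivative f') F \<Longrightarrow> ((\<lambda>s. f s $ i) has_vector_derivative f' $ i) F"
  by (rule bounded_linear.has_vector_derivative[OF bounded_linear_vec_nth])

lemma vector_4_nth [simp]:
  "(vector [a, b, c, d] :: 'a::zero^4) $ 1 = a"
  "(vector [a, b, c, d] :: 'a::zero^4) $ 2 = b"
  "(vector [a, b, c, d] :: 'a::zero^4) $ 3 = c"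
  "(vector [a, b, c, d] :: 'a::zero^4) $ 4 = d"
  by (simp_all add: vector_def)

lemma has_vector_derivative_vector_4:
  fixes f1 f2 f3 f4 :: "real \<Rightarrow> 'a::real_normed_vector"
  assumes "(f1 has_vector_derivative a) (at t)" "(f2 has_vector_derivative b) (at t)"
    "(f3 has_vector_derivative c) (at t)" "(f4 has_vector_derivative d) (at t)"
  shows "((\<lambda>s. vector [f1 s, f2 s, f3 s, f4 s] :: 'a^4) has_vector_derivative vector [a, b, c, d])
    (at t)"
proof (rule has_vector_derivative_vec_lambda)
  fix i :: 4
  show "((\<lambda>s. vector [f1 s, f2 s, f3 s, f4 s] $ i) has_vector_derivative vector [a, b, c, d] $ i) (at t)"
    using assms exhaust_4[of i] by auto
qed

lemma vector_derivative_nth_unique: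
  fixes P :: "real \<Rightarrow> 'a::real_normed_vector^'n"
  assumes "open I" "t \<in> I" "\<And>s. s \<in> I \<Longrightarrow> P s $ i = T s"
    and "(P has_vector_derivative P') (at t)" "(T has_vector_derivative T') (at t)"
  shows "P' $ i = T'"
proof -
  have "((\<lambda>s. P s $ i) has_vector_derivative P' $ i) (at t)"
    using assms(4) by (rule has_vector_derivative_vec_nth)
  then have "(T has_vector_derivative P' $ i) (at t)"
    by (rule has_vector_derivative_transform_within_open) (use assms(1-3) in auto)
  then show ?thesis
    using assms(5) by (rule vector_derivative_unique_at)
qed

lemma vec_nth_eq_if_derivative_nth_eq_0:
  fixes N :: "real \<Rightarrow> 'a::real_normed_vector^'n"
  assumes "a \<le> b" "\<And>s. s \<in> {a..b} \<Longrightarrow> (N has_vector_derivative N' s) (at s)"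
    and "\<And>s. s \<in> {a..b} \<Longrightarrow> N' s $ k = 0"
  shows "N b $ k = N a $ k"
proof -
  have "((\<lambda>s. N s $ k) has_vector_derivative 0) (at s within {a..b})" if "s \<in> {a..b}" for s
    using has_vector_derivative_vec_nth[OF assms(2)[OF that], of k] assms(3)[OF that]
    by (simp add: has_vector_derivative_at_within)
  then obtain c where "\<And>s. s \<in> {a..b} \<Longrightarrow> N s $ k = c"
    using has_vector_derivative_zero_constant[of "{a..b}" "\<lambda>s. N s $ k"] by auto
  with assms(1) show ?thesis
    by simp
qed

lemma isCont_eq_on_closure:
  fixes f :: "'a::metric_space \<Rightarrow> 'b::t2_space"
  assumes "isCont f x" "x \<in> closure S" "\<And>s. s \<in> S \<Longrightarrow> f s = c"
  shows "f x = c"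
proof -
  obtain \<sigma> where \<sigma>: "\<And>n. \<sigma> n \<in> S" "\<sigma> \<longlonglongrightarrow> x"
    using assms(2) by (meson closure_sequential)
  have "(\<lambda>n. f (\<sigma> n)) \<longlonglongrightarrow> f x"
    using assms(1) \<sigma>(2) by (rule isCont_tendsto_compose)
  moreover have "(\<lambda>n. f (\<sigma> n)) = (\<lambda>n. c)"
    using assms(3) \<sigma>(1) by simp
  ultimately show ?thesis
    using LIMSEQ_unique tendsto_const by metis
qed

lemma nth_eq_0_if_orthogonal_to_axis_vector:
  fixes u v :: "real^'n"
  assumes "norm u = 1" "\<And>i. i \<noteq> m \<Longrightarrow> u $ i = 0" "v \<bullet> u = 0"
  shows "v $ m = 0"
proof -
  have u: "u = axis m (u $ m)"
    using assms(2) by (auto simp: vec_eq_iff axis_def)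
  moreover have "u \<noteq> 0"
    using assms(1) by auto
  ultimately have "u $ m \<noteq> 0"
    by (metis axis_eq_0_iff)
  with assms(3) show ?thesis
    by (subst (asm) u) (simp add: inner_axis)
qed

subsection \<open>Smooth functions\<close>

lemma smooth_on_const [simp]: "smooth_on S (\<lambda>t. c)"
  unfolding smooth_on_def by (intro exI[of _ "\<lambda>n t. if n = 0 then c else 0"]) auto

lemma smooth_on_add:
  assumes "smooth_on S f" "smooth_on S g"
  shows "smooth_on S (\<lambda>t. f t + g t)"
proof -
  obtain Df Dg where "Df 0 = f" "Dg 0 = g"
    and "\<And>n t. t \<in> S \<Longrightarrow> (Df n has_vector_derivative Df (Suc n) t) (at t)"
    and "\<And>n t. t \<in> S \<Longrightarrow> (Dg n has_vector_derivative Dg (Suc n) t) (at t)"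
    using assms unfolding smooth_on_def by metis
  then show ?thesis
    unfolding smooth_on_def
    by (intro exI[of _ "\<lambda>n t. Df n t + Dg n t"]) (auto intro: has_vector_derivative_add)
qed

lemma smooth_on_bounded_linear:
  assumes "smooth_on S f" "bounded_linear L"
  shows "smooth_on S (\<lambda>t. L (f t))"
proof -
  obtain D where "D 0 = f" "\<And>n t. t \<in> S \<Longrightarrow> (D n has_vector_derivative D (Suc n) t) (at t)"
    using assms(1) unfolding smooth_on_def by metis
  then show ?thesis
    unfolding smooth_on_def
    by (intro exI[of _ "\<lambda>n t. L (D n t)"]) (auto intro: bounded_linear.has_vector_derivative[OF assms(2)])
qed

lemma smooth_on_minus: "smooth_on S f \<Longrightarrow> smooth_on S (\<lambda>t. - f t)"
  by (rule smooth_on_bounded_linear) (auto intro: bounded_linear_minus bounded_linear_ident)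

lemma smooth_on_diff: "smooth_on S f \<Longrightarrow> smooth_on S g \<Longrightarrow> smooth_on S (\<lambda>t. f t - g t)"
  using smooth_on_add[of S f "\<lambda>t. - g t"] smooth_on_minus[of S g] by simp

lemma smooth_on_sum:
  "finite A \<Longrightarrow> (\<And>i. i \<in> A \<Longrightarrow> smooth_on S (f i)) \<Longrightarrow> smooth_on S (\<lambda>t. \<Sum>i\<in>A. f i t)"
  by (induction A rule: finite_induct) (auto intro: smooth_on_add)

lemma smooth_on_scaleR_const:
  "smooth_on S f \<Longrightarrow> smooth_on S (\<lambda>t. f t *\<^sub>R c)"
  by (rule smooth_on_bounded_linear) (auto intro: bounded_linear_scaleR_left)

lemma smooth_on_vec_lambda:
  fixes f :: "real \<Rightarrow> 'a::real_normed_vector^'n"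
  assumes "\<And>i. smooth_on S (\<lambda>t. f t $ i)"
  shows "smooth_on S f"
proof -
  obtain D where D: "\<And>i. D i 0 = (\<lambda>t. f t $ i)"
    "\<And>i n t. t \<in> S \<Longrightarrow> (D i n has_vector_derivative D i (Suc n) t) (at t)"
    using assms unfolding smooth_on_def by metis
  show ?thesis
    unfolding smooth_on_def
  proof (intro exI[of _ "\<lambda>n t. \<chi> i. D i n t"] conjI allI ballI)
    show "(\<lambda>t. \<chi> i. D i 0 t) = f"
      using D(1) by (simp add: vec_lambda_eta)
  qed (use D(2) in \<open>auto intro: has_vector_derivative_vec_lambda\<close>)
qed

lemma smooth_on_vector_4:
  fixes f1 f2 f3 f4 :: "real \<Rightarrow> 'a::real_normed_vector"
  assumes "smooth_on S f1" "smooth_on S f2" "smooth_on S f3" "smooth_on S f4"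
  shows "smooth_on S (\<lambda>t. vector [f1 t, f2 t, f3 t, f4 t] :: 'a^4)"
proof (rule smooth_on_vec_lambda)
  fix i :: 4
  show "smooth_on S (\<lambda>t. vector [f1 t, f2 t, f3 t, f4 t] $ i)"
    using assms exhaust_4[of i] by auto
qed

lemma smooth_on_if_has_smooth_derivative:
  assumes "smooth_on S f'" "\<And>t. t \<in> S \<Longrightarrow> (f has_vector_derivative f' t) (at t)"
  shows "smooth_on S f"
proof -
  obtain D where "D 0 = f'" "\<And>n t. t \<in> S \<Longrightarrow> (D n has_vector_derivative D (Suc n) t) (at t)"
    using assms(1) unfolding smooth_on_def by metis
  then show ?thesis
    unfolding smooth_on_def using assms(2)
    by (intro exI[of _ "case_nat f D"]) (auto split: nat.split)
qed

lemma smooth_on_if_derivative_closed: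
  assumes "f \<in> F" and closed: "\<And>g. g \<in> F \<Longrightarrow> \<exists>g'\<in>F. \<forall>t. (g has_real_derivative g' t) (at t)"
  shows "smooth_on S f"
proof -
  obtain d where d: "\<And>g. g \<in> F \<Longrightarrow> d g \<in> F \<and> (\<forall>t. (g has_real_derivative d g t) (at t))"
    using closed by metis
  have "(d ^^ n) f \<in> F" for n
    by (induction n) (use assms(1) d in auto)
  then show ?thesis
    unfolding smooth_on_def using d
    by (intro exI[of _ "\<lambda>n. (d ^^ n) f"]) (auto simp: has_real_derivative_iff_has_vector_derivative)
qed

definition exp_inv_pow :: "nat \<Rightarrow> real \<Rightarrow> real" where
  "exp_inv_pow k t = (if t \<le> 0 then 0 else exp (- inverse t) * inverse t ^ k)"

lemma exp_inv_pow_tendsto_0: "(exp_inv_pow k \<longlongrightarrow> 0) (at 0)"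
proof (rule filterlim_split_at)
  show "(exp_inv_pow k \<longlongrightarrow> 0) (at_left 0)"
    by (rule tendsto_eventually) (auto simp: eventually_at_left_field exp_inv_pow_def intro: exI[of _ "-1"])
  have "((\<lambda>x. x ^ k / exp x) \<longlongrightarrow> (0::real)) at_top"
    by (rule tendsto_power_div_exp_0)
  then have "((\<lambda>t. inverse t ^ k / exp (inverse t)) \<longlongrightarrow> (0::real)) (at_right 0)"
    using filterlim_compose filterlim_inverse_at_top_right by blast
  then show "(exp_inv_pow k \<longlongrightarrow> 0) (at_right 0)"
    by (rule Lim_transform_eventually)
      (auto simp: eventually_at_right_field exp_inv_pow_def exp_minus field_simps intro: exI[of _ 1])
qed

lemma exp_inv_pow_has_derivative:
  "(exp_inv_pow k has_real_derivative exp_inv_pow (k + 2) t - real k * exp_inv_pow (k + 1) t) (at t)"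
proof (cases t "0 :: real" rule: linorder_cases)
  case less
  have "((\<lambda>_. 0) has_real_derivative 0) (at t)"
    by simp
  then have "(exp_inv_pow k has_real_derivative 0) (at t)"
    by (rule has_field_derivative_transform_within_open[of _ _ _ "{..<0}"])
      (use less in \<open>auto simp: exp_inv_pow_def\<close>)
  then show ?thesis
    using less by (simp add: exp_inv_pow_def)
next
  case equal
  have "((\<lambda>s. (exp_inv_pow k s - exp_inv_pow k 0) / (s - 0)) \<longlongrightarrow> 0) (at 0)"
    by (rule Lim_transform_eventually[OF exp_inv_pow_tendsto_0[of "k + 1"]])
      (auto simp: eventually_at exp_inv_pow_def field_simps intro!: exI[of _ 1])
  then show ?thesis
    using equal by (simp add: has_field_derivative_iff exp_inv_pow_def)
next
  case greater
  have "((\<lambda>t. exp (- inverse t) * inverse t ^ k) has_real_derivative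
      exp (- inverse t) * inverse t ^ 2 * inverse t ^ k
      - exp (- inverse t) * (real k * inverse t ^ (k - 1) * inverse t ^ 2)) (at t)"
    using greater by (auto intro!: derivative_eq_intros simp: power2_eq_square)
  moreover have "exp (- inverse t) * inverse t ^ 2 * inverse t ^ k
      - exp (- inverse t) * (real k * inverse t ^ (k - 1) * inverse t ^ 2)
      = exp_inv_pow (k + 2) t - real k * exp_inv_pow (k + 1) t"
    using greater by (cases k) (simp_all add: exp_inv_pow_def power2_eq_square field_simps)
  ultimately have "((\<lambda>t. exp (- inverse t) * inverse t ^ k) has_real_derivative
      exp_inv_pow (k + 2) t - real k * exp_inv_pow (k + 1) t) (at t)"
    by simp
  then show ?thesis
    by (rule has_field_derivative_transform_within_open[of _ _ _ "{0<..}"])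
      (use greater in \<open>auto simp: exp_inv_pow_def\<close>)
qed

inductive_set elementary_smooth :: "(real \<Rightarrow> real) set" where
  const: "(\<lambda>t. c) \<in> elementary_smooth"
| exp_inv_pow: "exp_inv_pow k \<in> elementary_smooth"
| add: "f \<in> elementary_smooth \<Longrightarrow> g \<in> elementary_smooth \<Longrightarrow> (\<lambda>t. f t + g t) \<in> elementary_smooth"
| mult: "f \<in> elementary_smooth \<Longrightarrow> g \<in> elementary_smooth \<Longrightarrow> (\<lambda>t. f t * g t) \<in> elementary_smooth"
| sin: "f \<in> elementary_smooth \<Longrightarrow> (\<lambda>t. sin (f t)) \<in> elementary_smooth"
| cos: "f \<in> elementary_smooth \<Longrightarrow> (\<lambda>t. cos (f t)) \<in> elementary_smooth"
| affine: "f \<in> elementary_smooth \<Longrightarrow> (\<lambda>t. f (a * t + c)) \<in> elementary_smooth"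

lemma has_real_derivative_affine_compose:
  assumes "(f has_real_derivative f') (at (a * t + c))"
  shows "((\<lambda>t. f (a * t + c)) has_real_derivative a * f') (at t)"
proof -
  have "((\<lambda>t. a * t + c) has_real_derivative a) (at t)"
    by (auto intro!: derivative_eq_intros)
  from DERIV_chain2[OF assms this] show ?thesis
    by (simp add: mult.commute)
qed

lemma elementary_smooth_has_derivative:
  "f \<in> elementary_smooth \<Longrightarrow> \<exists>f'\<in>elementary_smooth. \<forall>t. (f has_real_derivative f' t) (at t)"
proof (induction rule: elementary_smooth.induct)
  case (const c)
  show ?case
    by (intro bexI[of _ "\<lambda>t. 0"]) (auto intro: elementary_smooth.const)
next
  case (exp_inv_pow k)
  have "(\<lambda>t. exp_inv_pow (k + 2) t + (- real k) * exp_inv_pow (k + 1) t) \<in> elementary_smooth"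
    by (intro elementary_smooth.intros)
  then show ?case
    using exp_inv_pow_has_derivative[of k] by (auto intro!: bexI)
next
  case (add f g)
  then show ?case
    by (fastforce intro: elementary_smooth.add derivative_eq_intros)
next
  case (mult f g)
  then obtain f' g' where "f' \<in> elementary_smooth" "g' \<in> elementary_smooth"
    "\<forall>t. (f has_real_derivative f' t) (at t)" "\<forall>t. (g has_real_derivative g' t) (at t)"
    by blast
  with mult.hyps show ?case
    by (intro bexI[of _ "\<lambda>t. f' t * g t + f t * g' t"])
      (auto intro!: derivative_eq_intros elementary_smooth.intros)
next
  case (sin f)
  then obtain f' where "f' \<in> elementary_smooth" "\<forall>t. (f has_real_derivative f' t) (at t)"
    by blast
  with sin.hyps show ?case
    by (intro bexI[of _ "\<lambda>t. cos (f t) * f' t"]) (auto intro!: derivative_eq_intros elementary_smooth.intros)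
next
  case (cos f)
  then obtain f' where f': "f' \<in> elementary_smooth" "\<forall>t. (f has_real_derivative f' t) (at t)"
    by blast
  have "(\<lambda>t. (- 1) * sin (f t) * f' t) \<in> elementary_smooth"
    by (intro elementary_smooth.intros cos.hyps f'(1))
  with f'(2) show ?case
    by (intro bexI[of _ "\<lambda>t. (- 1) * sin (f t) * f' t"]) (auto intro!: derivative_eq_intros)
next
  case (affine f a c)
  then obtain f' where f': "f' \<in> elementary_smooth" "\<forall>t. (f has_real_derivative f' t) (at t)"
    by blast
  have "(\<lambda>t. a * f' (a * t + c)) \<in> elementary_smooth"
    by (intro elementary_smooth.intros f'(1))
  with f'(2) show ?case
    by (intro bexI[of _ "\<lambda>t. a * f' (a * t + c)"]) (auto intro: has_real_derivative_affine_compose)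
qed

lemma elementary_smooth_smooth_on: "f \<in> elementary_smooth \<Longrightarrow> smooth_on S f"
  using smooth_on_if_derivative_closed elementary_smooth_has_derivative by blast

lemma elementary_smooth_derivative:
  assumes "f \<in> elementary_smooth" "\<And>t. (f has_real_derivative f' t) (at t)"
  shows "f' \<in> elementary_smooth"
proof -
  obtain g where "g \<in> elementary_smooth" "\<And>t. (f has_real_derivative g t) (at t)"
    using elementary_smooth_has_derivative[OF assms(1)] by blast
  moreover have "g = f'"
    using DERIV_unique assms(2) calculation(2) by blast
  ultimately show ?thesis
    by simp
qed

subsection \<open>Frames of type C and D\<close>

lemma orthogonal_matrix_iff_rows_inner:
  fixes A :: "real^'n^'n"
  shows "orthogonal_matrix A \<longleftrightarrow> (\<forall>i j. A $ i \<bullet> A $ j = (if i = j then 1 else 0))"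
  by (auto simp: orthogonal_matrix_orthonormal_rows row_def vec_lambda_eta norm_eq_1 orthogonal_def)

lemma orthogonal_matrix_permute_rows:
  fixes A :: "real^'n^'n"
  assumes "orthogonal_matrix A" "\<sigma> permutes UNIV"
  shows "orthogonal_matrix (\<chi> i. A $ \<sigma> i)"
  using assms permutes_inj[OF assms(2)] by (auto simp: orthogonal_matrix_iff_rows_inner dest: injD)

lemma shape_C_mult:
  "shape_C a b c ** Q =
     vector [a *\<^sub>R Q $ 2 + b *\<^sub>R Q $ 3, - a *\<^sub>R Q $ 1 + c *\<^sub>R Q $ 4, - b *\<^sub>R Q $ 1, - c *\<^sub>R Q $ 2]"
  by (simp add: vec_eq_iff forall_4 matrix_matrix_mult_def sum_4 shape_C_def)

lemma shape_D_mult: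
  "shape_D a b c ** Q =
     vector [a *\<^sub>R Q $ 2, - a *\<^sub>R Q $ 1 + b *\<^sub>R Q $ 3 + c *\<^sub>R Q $ 4, - b *\<^sub>R Q $ 2, - c *\<^sub>R Q $ 2]"
  by (simp add: vec_eq_iff forall_4 matrix_matrix_mult_def sum_4 shape_D_def)

lemma admits_frame_typeE:
  assumes "admits_frame_type I \<gamma> M"
  obtains P :: "real \<Rightarrow> real^4^4" and x1 x2 x3 :: "real \<Rightarrow> real" where
    "\<And>t. t \<in> I \<Longrightarrow> P t $ 1 = vector_derivative \<gamma> (at t)"
    "\<And>t. t \<in> I \<Longrightarrow> orthogonal_matrix (P t)"
    "\<And>t. t \<in> I \<Longrightarrow> (P has_vector_derivative M (x1 t) (x2 t) (x3 t) ** P t) (at t)"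
proof -
  obtain Z \<sigma> x1 x2 x3 where Z: "frame_on I \<gamma> Z" and \<sigma>: "\<sigma> permutes UNIV" "\<sigma> 1 = 1"
    and "\<forall>t\<in>I. ((\<lambda>s. \<chi> i. Z s $ \<sigma> i) has_vector_derivative
       M (x1 t) (x2 t) (x3 t) ** (\<chi> i. Z t $ \<sigma> i)) (at t)"
    using assms unfolding admits_frame_type_def by blast
  with that[of "\<lambda>s. \<chi> i. Z s $ \<sigma> i"] show ?thesis
    using Z \<sigma> by (auto simp: frame_on_def orthogonal_matrix_permute_rows)
qed

lemma admits_frame_type_D_normal:
  fixes T T' :: "real \<Rightarrow> real^4"
  assumes "admits_frame_type I \<gamma> shape_D" "open I"
    and "\<And>t. t \<in> I \<Longrightarrow> vector_derivative \<gamma> (at t) = T t"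
    and "\<And>t. t \<in> I \<Longrightarrow> (T has_vector_derivative T' t) (at t)"
  obtains N :: "real \<Rightarrow> real^4" and \<kappa> :: "real \<Rightarrow> real" where
    "continuous_on I N"
    "\<And>t. t \<in> I \<Longrightarrow> norm (N t) = 1"
    "\<And>t. t \<in> I \<Longrightarrow> N t \<bullet> T t = 0"
    "\<And>t. t \<in> I \<Longrightarrow> T' t = \<kappa> t *\<^sub>R N t"
proof -
  obtain P x1 x2 x3 where P1: "\<And>t. t \<in> I \<Longrightarrow> P t $ 1 = T t"
    and P: "\<And>t. t \<in> I \<Longrightarrow> orthogonal_matrix (P t)"
    and P': "\<And>t. t \<in> I \<Longrightarrow> (P has_vector_derivative shape_D (x1 t) (x2 t) (x3 t) ** P t) (at t)"
    using admits_frame_typeE[OF assms(1)] assms(3) by metis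
  have "continuous_on I P"
    using P' by (meson continuous_at_imp_continuous_on has_vector_derivative_continuous)
  have rows: "P t $ i \<bullet> P t $ j = (if i = j then 1 else 0)" if "t \<in> I" for t i j
    using P[OF that] by (simp add: orthogonal_matrix_iff_rows_inner)
  show ?thesis
  proof (rule that[of "\<lambda>t. P t $ 2" x1])
    show "continuous_on I (\<lambda>t. P t $ 2)"
      using \<open>continuous_on I P\<close> by (rule continuous_on_component)
    fix t assume "t \<in> I"
    show "norm (P t $ 2) = 1" "P t $ 2 \<bullet> T t = 0"
      using rows[OF \<open>t \<in> I\<close>] P1[OF \<open>t \<in> I\<close>, symmetric] by (auto simp: norm_eq_1)
    show "T' t = x1 t *\<^sub>R P t $ 2"
      using vector_derivative_nth_unique[OF assms(2) \<open>t \<in> I\<close> P1 P'[OF \<open>t \<in> I\<close>] assms(4)[OF \<open>t \<in> I\<close>]]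
      by (simp add: shape_D_mult)
  qed
qed

lemma admits_frame_type_C_normals:
  fixes T T' :: "real \<Rightarrow> real^4"
  assumes "admits_frame_type I \<gamma> shape_C" "open I"
    and "\<And>t. t \<in> I \<Longrightarrow> vector_derivative \<gamma> (at t) = T t"
    and "\<And>t. t \<in> I \<Longrightarrow> (T has_vector_derivative T' t) (at t)"
  obtains N B :: "real \<Rightarrow> real^4" and \<kappa> :: "real \<Rightarrow> real" where
    "continuous_on I B"
    "\<And>t. t \<in> I \<Longrightarrow> (N has_vector_derivative - \<kappa> t *\<^sub>R T t) (at t)"
    "\<And>t. t \<in> I \<Longrightarrow> norm (N t) = 1" "\<And>t. t \<in> I \<Longrightarrow> norm (B t) = 1"
    "\<And>t. t \<in> I \<Longrightarrow> N t \<bullet> B t = 0"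
    "\<And>t. t \<in> I \<Longrightarrow> N t \<bullet> T t = 0" "\<And>t. t \<in> I \<Longrightarrow> B t \<bullet> T t = 0"
    "\<And>t. t \<in> I \<Longrightarrow> B t \<bullet> T' t = 0"
proof -
  obtain P x1 x2 x3 where P1: "\<And>t. t \<in> I \<Longrightarrow> P t $ 1 = T t"
    and P: "\<And>t. t \<in> I \<Longrightarrow> orthogonal_matrix (P t)"
    and P': "\<And>t. t \<in> I \<Longrightarrow> (P has_vector_derivative shape_C (x1 t) (x2 t) (x3 t) ** P t) (at t)"
    using admits_frame_typeE[OF assms(1)] assms(3) by metis
  have "continuous_on I P"
    using P' by (meson continuous_at_imp_continuous_on has_vector_derivative_continuous)
  have rows: "P t $ i \<bullet> P t $ j = (if i = j then 1 else 0)" if "t \<in> I" for t i j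
    using P[OF that] by (simp add: orthogonal_matrix_iff_rows_inner)
  show ?thesis
  proof (rule that[of "\<lambda>t. P t $ 4" "\<lambda>t. P t $ 3" x2])
    show "continuous_on I (\<lambda>t. P t $ 4)"
      using \<open>continuous_on I P\<close> by (rule continuous_on_component)
    fix t assume "t \<in> I"
    show "norm (P t $ 3) = 1" "norm (P t $ 4) = 1" "P t $ 3 \<bullet> P t $ 4 = 0"
      "P t $ 3 \<bullet> T t = 0" "P t $ 4 \<bullet> T t = 0"
      using rows[OF \<open>t \<in> I\<close>] P1[OF \<open>t \<in> I\<close>, symmetric] by (auto simp: norm_eq_1)
    have "T' t = x1 t *\<^sub>R P t $ 2 + x2 t *\<^sub>R P t $ 3"
      using vector_derivative_nth_unique[OF assms(2) \<open>t \<in> I\<close> P1 P'[OF \<open>t \<in> I\<close>] assms(4)[OF \<open>t \<in> I\<close>]]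
      by (simp add: shape_C_mult)
    then show "P t $ 4 \<bullet> T' t = 0"
      using rows[OF \<open>t \<in> I\<close>] by (simp add: inner_add_right)
    show "((\<lambda>s. P s $ 3) has_vector_derivative - x2 t *\<^sub>R T t) (at t)"
      using has_vector_derivative_vec_nth[OF P'[OF \<open>t \<in> I\<close>], of 3] P1[OF \<open>t \<in> I\<close>]
      by (simp add: shape_C_mult)
  qed
qed

subsection \<open>Bump functions\<close>

definition bump :: "nat \<Rightarrow> real \<Rightarrow> real" where
  "bump j t = exp_inv_pow 0 (t - real j) * exp_inv_pow 0 (real j + 1 - t)"

definition bump_deriv :: "nat \<Rightarrow> real \<Rightarrow> real" where
  "bump_deriv j t = exp_inv_pow 2 (t - real j) * exp_inv_pow 0 (real j + 1 - t)
     - exp_inv_pow 0 (t - real j) * exp_inv_pow 2 (real j + 1 - t)"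

lemma bump_has_derivative: "(bump j has_real_derivative bump_deriv j t) (at t)"
proof -
  have d: "(exp_inv_pow 0 has_real_derivative exp_inv_pow 2 s) (at s)" for s
    using exp_inv_pow_has_derivative[of 0 s] by (simp add: numeral_2_eq_2)
  have "((\<lambda>t. exp_inv_pow 0 (t - real j)) has_real_derivative exp_inv_pow 2 (t - real j) * 1) (at t)"
    by (rule DERIV_chain2[OF d]) (auto intro!: derivative_eq_intros)
  moreover have "((\<lambda>t. exp_inv_pow 0 (real j + 1 - t)) has_real_derivative
      exp_inv_pow 2 (real j + 1 - t) * (- 1)) (at t)"
    by (rule DERIV_chain2[OF d]) (auto intro!: derivative_eq_intros)
  ultimately show ?thesis
    unfolding bump_def[abs_def] bump_deriv_def by (auto intro: DERIV_mult[THEN DERIV_cong])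
qed

lemma bump_elementary_smooth: "bump j \<in> elementary_smooth"
proof -
  have "(\<lambda>t. exp_inv_pow 0 (1 * t + - real j) * exp_inv_pow 0 ((- 1) * t + (real j + 1)))
      \<in> elementary_smooth"
    by (intro elementary_smooth.intros)
  then show ?thesis
    by (simp add: bump_def[abs_def] algebra_simps)
qed

lemma bump_deriv_elementary_smooth: "bump_deriv j \<in> elementary_smooth"
  using elementary_smooth_derivative[OF bump_elementary_smooth bump_has_derivative] .

lemma bump_eq_0: "t \<le> real j \<or> real j + 1 \<le> t \<Longrightarrow> bump j t = 0"
  and bump_deriv_eq_0: "t \<le> real j \<or> real j + 1 \<le> t \<Longrightarrow> bump_deriv j t = 0"
  by (auto simp: bump_def bump_deriv_def exp_inv_pow_def)

lemma bump_at_integer: "bump j (real n) = 0"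
  by (rule bump_eq_0) (auto simp flip: of_nat_Suc)

lemma bump_eq_0_on_other_piece:
  assumes "i \<noteq> j" "real j \<le> t" "t \<le> real j + 1"
  shows "bump i t = 0" "bump_deriv i t = 0"
proof -
  have "t \<le> real i \<or> real i + 1 \<le> t"
    using assms by (cases "i < j") auto
  then show "bump i t = 0" "bump_deriv i t = 0"
    by (simp_all add: bump_eq_0 bump_deriv_eq_0)
qed

lemma bump_deriv_nonzero:
  assumes "real j < t" "t < real j + 1" "t \<noteq> real j + 1/2"
  shows "bump_deriv j t \<noteq> 0"
proof -
  have "inverse (t - real j) ^ 2 \<noteq> inverse (real j + 1 - t) ^ 2"
  proof
    assume "inverse (t - real j) ^ 2 = inverse (real j + 1 - t) ^ 2"
    then have "t - real j = real j + 1 - t"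
      using assms by (subst (asm) power2_eq_iff_nonneg) auto
    with assms(3) show False
      by simp
  qed
  then show ?thesis
    using assms by (simp add: bump_deriv_def exp_inv_pow_def algebra_simps)
qed

lemma eq_0_on_piece_by_continuity:
  fixes f :: "real \<Rightarrow> real"
  assumes "isCont f x" "real j \<le> x" "x \<le> real j + 1"
    and "\<And>s. real j < s \<Longrightarrow> s < real j + 1 \<Longrightarrow> bump_deriv j s \<noteq> 0 \<Longrightarrow> f s = 0"
  shows "f x = 0"
proof -
  let ?S = "{real j<..<real j + 1/2} \<union> {real j + 1/2<..<real j + 1}"
  have "x \<in> closure ?S"
    using assms(2,3) by (auto simp: closure_Un)
  moreover have "f s = 0" if "s \<in> ?S" for s
    using that bump_deriv_nonzero[of j s] by (auto intro!: assms(4))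
  ultimately show ?thesis
    by (rule isCont_eq_on_closure[OF assms(1)])
qed

subsection \<open>The example curve\<close>

definition rotation_axis :: "nat \<Rightarrow> 4" where
  "rotation_axis j = [2, 3, 4, 2] ! j"

text \<open>Stated for \<open>Suc 0\<close> since the simplifier rewrites the numeral \<open>1 :: nat\<close> to \<open>Suc 0\<close>.\<close>
lemma rotation_axis_simps [simp]:
  "rotation_axis 0 = 2" "rotation_axis (Suc 0) = 3" "rotation_axis 2 = 4" "rotation_axis 3 = 2"
  by (simp_all add: rotation_axis_def numeral_eq_Suc)

lemma rotation_axis_neq_1: "j < 4 \<Longrightarrow> rotation_axis j \<noteq> 1"
  by (auto simp: rotation_axis_def less_Suc_eq numeral_eq_Suc)

definition plane_tangent :: "nat \<Rightarrow> real \<Rightarrow> real^4" where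
  "plane_tangent j t = cos (bump j t) *\<^sub>R axis 1 1 + sin (bump j t) *\<^sub>R axis (rotation_axis j) 1"

definition plane_normal :: "nat \<Rightarrow> real \<Rightarrow> real^4" where
  "plane_normal j t = cos (bump j t) *\<^sub>R axis (rotation_axis j) 1 - sin (bump j t) *\<^sub>R axis 1 1"

definition tangent :: "real \<Rightarrow> real^4" where
  "tangent t = axis 1 1 + (\<Sum>j<4. plane_tangent j t - axis 1 1)"

definition tangent_deriv :: "real \<Rightarrow> real^4" where
  "tangent_deriv t = (\<Sum>j<4. bump_deriv j t *\<^sub>R plane_normal j t)"

definition curve :: "real \<Rightarrow> real^4" where
  "curve t = integral {0..t} tangent"

lemma plane_tangent_has_derivative:
  "(plane_tangent j has_vector_derivative bump_deriv j t *\<^sub>R plane_normal j t) (at t)"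
  unfolding plane_tangent_def[abs_def] plane_normal_def
  by (auto intro!: derivative_eq_intros bump_has_derivative simp: algebra_simps)

lemma plane_normal_has_derivative:
  "(plane_normal j has_vector_derivative - bump_deriv j t *\<^sub>R plane_tangent j t) (at t)"
  unfolding plane_tangent_def plane_normal_def[abs_def]
  by (auto intro!: derivative_eq_intros bump_has_derivative simp: algebra_simps)

lemma tangent_has_derivative: "(tangent has_vector_derivative tangent_deriv t) (at t)"
  unfolding tangent_def[abs_def] tangent_deriv_def
  by (auto intro!: derivative_eq_intros plane_tangent_has_derivative)

lemma plane_tangent_at_rest: "bump j t = 0 \<Longrightarrow> plane_tangent j t = axis 1 1"
  and plane_normal_at_rest: "bump j t = 0 \<Longrightarrow> plane_normal j t = axis (rotation_axis j) 1"
  by (simp_all add: plane_tangent_def plane_normal_def)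

lemma tangent_on_piece:
  assumes "j < 4" "real j \<le> t" "t \<le> real j + 1"
  shows "tangent t = plane_tangent j t"
proof -
  have "plane_tangent i t = axis 1 1" if "i \<noteq> j" for i
    using bump_eq_0_on_other_piece(1)[OF that assms(2,3)] by (rule plane_tangent_at_rest)
  then have "(\<Sum>i\<in>{..<4} - {j}. plane_tangent i t - axis 1 1) = 0"
    by (intro sum.neutral) auto
  then show ?thesis
    using assms by (simp add: tangent_def sum.remove[of "{..<4}" j])
qed

lemma tangent_deriv_on_piece:
  assumes "j < 4" "real j \<le> t" "t \<le> real j + 1"
  shows "tangent_deriv t = bump_deriv j t *\<^sub>R plane_normal j t"
proof -
  have "(\<Sum>i\<in>{..<4} - {j}. bump_deriv i t *\<^sub>R plane_normal i t) = 0"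
    using bump_eq_0_on_other_piece(2)[OF _ assms(2,3)] by (intro sum.neutral) auto
  then show ?thesis
    using assms by (simp add: tangent_deriv_def sum.remove[of "{..<4}" j])
qed

lemma tangent_deriv_le_2:
  assumes "t \<le> 2"
  shows "tangent_deriv t = bump_deriv 0 t *\<^sub>R plane_normal 0 t + bump_deriv 1 t *\<^sub>R plane_normal 1 t"
  using assms by (simp add: tangent_deriv_def numeral_eq_Suc bump_deriv_eq_0)

lemma tangent_at_integer: "tangent (real n) = axis 1 1"
  by (simp add: tangent_def bump_at_integer plane_tangent_at_rest)

lemma bump_deriv_scaleR_plane_tangent:
  assumes "j < 4"
  shows "bump_deriv j t *\<^sub>R plane_tangent j t = bump_deriv j t *\<^sub>R tangent t"
proof (cases "bump_deriv j t = 0")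
  case False
  then have "real j \<le> t" "t \<le> real j + 1"
    using bump_deriv_eq_0 by (meson linear)+
  with assms show ?thesis
    by (simp add: tangent_on_piece)
qed simp

lemma norm_plane_tangent: "j < 4 \<Longrightarrow> norm (plane_tangent j t) = 1"
  by (simp add: norm_eq_1 plane_tangent_def inner_add_left inner_add_right inner_axis_axis
      rotation_axis_neq_1 flip: power2_eq_square)

lemma norm_plane_normal: "j < 4 \<Longrightarrow> norm (plane_normal j t) = 1"
  by (simp add: norm_eq_1 plane_normal_def inner_diff_left inner_diff_right inner_axis_axis
      rotation_axis_neq_1 flip: power2_eq_square)

lemma plane_tangent_nth_eq_0: "k \<noteq> 1 \<Longrightarrow> k \<noteq> rotation_axis j \<Longrightarrow> plane_tangent j t $ k = 0"
  and plane_normal_nth_eq_0: "k \<noteq> 1 \<Longrightarrow> k \<noteq> rotation_axis j \<Longrightarrow> plane_normal j t $ k = 0"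
  by (simp_all add: plane_tangent_def plane_normal_def axis_def)

lemma tangent_nth_eq_0_on_piece:
  assumes "j < 4" "real j \<le> t" "t \<le> real j + 1" "k \<noteq> 1" "k \<noteq> rotation_axis j"
  shows "tangent t $ k = 0"
  using assms by (simp add: tangent_on_piece plane_tangent_nth_eq_0)

lemma pieceE:
  assumes "0 \<le> t" "t \<le> 4"
  obtains j :: nat where "j < 4" "real j \<le> t" "t \<le> real j + 1"
proof -
  consider "t \<le> 1" | "1 \<le> t" "t \<le> 2" | "2 \<le> t" "t \<le> 3" | "3 \<le> t"
    by linarith
  then show ?thesis
    using assms that[of 0] that[of 1] that[of 2] that[of 3] by cases auto
qed

lemma norm_tangent: "0 \<le> t \<Longrightarrow> t \<le> 4 \<Longrightarrow> norm (tangent t) = 1"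
  by (metis pieceE tangent_on_piece norm_plane_tangent)

lemma smooth_on_plane_tangent: "smooth_on S (plane_tangent j)"
  and smooth_on_plane_normal: "smooth_on S (plane_normal j)"
  unfolding plane_tangent_def[abs_def] plane_normal_def[abs_def]
  by (intro smooth_on_add smooth_on_diff smooth_on_scaleR_const elementary_smooth_smooth_on
      elementary_smooth.sin elementary_smooth.cos bump_elementary_smooth)+

lemma smooth_on_tangent: "smooth_on S tangent"
  unfolding tangent_def[abs_def]
  by (intro smooth_on_add smooth_on_sum smooth_on_diff smooth_on_const smooth_on_plane_tangent) auto

lemma continuous_on_tangent: "continuous_on S tangent"
  using tangent_has_derivative has_vector_derivative_continuous continuous_at_imp_continuous_on by blast

lemma curve_has_derivative:
  assumes "0 < t"
  shows "(curve has_vector_derivative tangent t) (at t)"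
proof -
  have "((\<lambda>u. integral {0..u} tangent) has_vector_derivative tangent t) (at t within {0..t + 1})"
    by (rule integral_has_vector_derivative) (use assms continuous_on_tangent in auto)
  then have "((\<lambda>u. integral {0..u} tangent) has_vector_derivative tangent t) (at t within {0<..<t + 1})"
    by (rule has_vector_derivative_within_subset) auto
  then show ?thesis
    unfolding curve_def[abs_def] using assms has_vector_derivative_within_open[of t "{0<..<t + 1}"]
    by auto
qed

lemma vector_derivative_curve: "0 < t \<Longrightarrow> vector_derivative curve (at t) = tangent t"
  using curve_has_derivative vector_derivative_at by blast

lemma unit_speed_curve_curve:
  assumes "0 < b" "b \<le> 4"
  shows "unit_speed_curve {0<..<b} curve"
proof -
  have "smooth_on {0<..<b} curve"
    by (rule smooth_on_if_has_smooth_derivative[OF smooth_on_tangent]) (simp add: curve_has_derivative)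
  then show ?thesis
    using assms by (auto simp: unit_speed_curve_def is_interval_def vector_derivative_curve norm_tangent)
qed

subsection \<open>Frames along the example curve\<close>

definition rotating_frame :: "real \<Rightarrow> real^4^4" where
  "rotating_frame t = vector [tangent t, plane_normal 0 t, plane_normal 1 t, axis 4 1]"

lemma rotating_frame_has_derivative:
  "(rotating_frame has_vector_derivative
     vector [tangent_deriv t, - bump_deriv 0 t *\<^sub>R plane_tangent 0 t, - bump_deriv 1 t *\<^sub>R plane_tangent 1 t, 0])
   (at t)"
  unfolding rotating_frame_def[abs_def]
  by (intro has_vector_derivative_vector_4 tangent_has_derivative plane_normal_has_derivative) simp

lemma rotating_frame_coefficients:
  assumes "t \<le> 2"
  shows "vector [tangent_deriv t, - bump_deriv 0 t *\<^sub>R plane_tangent 0 t, - bump_deriv 1 t *\<^sub>R plane_tangent 1 t, 0]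
    = shape_C (bump_deriv 0 t) (bump_deriv 1 t) 0 ** rotating_frame t"
  using assms
  by (simp add: shape_C_mult rotating_frame_def tangent_deriv_le_2 bump_deriv_scaleR_plane_tangent)

lemma orthogonal_matrix_rotating_frame:
  assumes "0 \<le> t" "t \<le> 2"
  shows "orthogonal_matrix (rotating_frame t)"
proof -
  consider "t \<le> 1" | "1 \<le> t"
    by linarith
  then show ?thesis
  proof cases
    case 1
    then have "rotating_frame t = vector [plane_tangent 0 t, plane_normal 0 t, axis 3 1, axis 4 1]"
      using assms bump_eq_0[of t 1] tangent_on_piece[of 0 t]
      by (simp add: rotating_frame_def plane_normal_at_rest)
    then show ?thesis
      by (simp add: orthogonal_matrix_iff_rows_inner forall_4 plane_tangent_def plane_normal_def
          inner_add_left inner_add_right inner_diff_left inner_diff_right inner_axis_axis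
          flip: power2_eq_square)
  next
    case 2
    then have "rotating_frame t = vector [plane_tangent 1 t, axis 2 1, plane_normal 1 t, axis 4 1]"
      using assms bump_eq_0[of t 0] tangent_on_piece[of 1 t]
      by (simp add: rotating_frame_def plane_normal_at_rest)
    then show ?thesis
      by (simp add: orthogonal_matrix_iff_rows_inner forall_4 plane_tangent_def plane_normal_def
          inner_add_left inner_add_right inner_diff_left inner_diff_right inner_axis_axis
          flip: power2_eq_square)
  qed
qed

lemma curve_admits_frame_type_C: "admits_frame_type {0<..<2} curve shape_C"
proof -
  have "smooth_on {0<..<2} rotating_frame"
    unfolding rotating_frame_def[abs_def]
    by (intro smooth_on_vector_4 smooth_on_tangent smooth_on_plane_normal smooth_on_const)
  moreover have "rotating_frame t $ 1 = tangent t" for t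
    by (simp add: rotating_frame_def)
  ultimately have "frame_on {0<..<2} curve rotating_frame"
    by (simp add: frame_on_def orthogonal_matrix_rotating_frame vector_derivative_curve)
  moreover have "smooth_on {0<..<2} (bump_deriv j)" for j
    by (rule elementary_smooth_smooth_on[OF bump_deriv_elementary_smooth])
  moreover have "(rotating_frame has_vector_derivative
      shape_C (bump_deriv 0 t) (bump_deriv 1 t) 0 ** rotating_frame t) (at t)" if "t < 2" for t
    using rotating_frame_has_derivative[of t] rotating_frame_coefficients[of t] that by simp
  ultimately show ?thesis
    unfolding admits_frame_type_def
    by (intro exI[of _ rotating_frame] exI[of _ id] exI[of _ "bump_deriv 0"] exI[of _ "bump_deriv 1"]
        exI[of _ "\<lambda>_. 0"]) auto
qed

lemma nth_eq_0_if_parallel_to_tangent_deriv: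
  assumes "isCont N x" "j < 4" "real j \<le> x" "x \<le> real j + 1" "k \<noteq> 1" "k \<noteq> rotation_axis j"
    and parallel: "\<And>s. real j < s \<Longrightarrow> s < real j + 1 \<Longrightarrow> tangent_deriv s = \<kappa> s *\<^sub>R N s"
  shows "N x $ k = 0"
proof (rule eq_0_on_piece_by_continuity[where f = "\<lambda>s. N s $ k"])
  show "isCont (\<lambda>s. N s $ k) x"
    using assms(1) by (rule isCont_vec_nth)
  fix s assume s: "real j < s" "s < real j + 1" and "bump_deriv j s \<noteq> 0"
  then have "tangent_deriv s \<noteq> 0"
    using assms(2) norm_plane_normal[of j s] by (auto simp: tangent_deriv_on_piece)
  moreover have "tangent_deriv s $ k = 0"
    using s assms(2,5,6) by (simp add: tangent_deriv_on_piece plane_normal_nth_eq_0)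
  ultimately show "N s $ k = 0"
    using parallel[OF s] by auto
qed (use assms in auto)

lemma knot_nth_eq_0_if_orthogonal_to_tangent_deriv:
  assumes "isCont V (real n)" "j < 4" "n = j \<or> n = j + 1"
    and orthogonal: "\<And>s. real j < s \<Longrightarrow> s < real j + 1 \<Longrightarrow> V s \<bullet> tangent_deriv s = 0"
  shows "V (real n) $ rotation_axis j = 0"
proof -
  have "V (real n) \<bullet> plane_normal j (real n) = 0"
  proof (rule eq_0_on_piece_by_continuity[where f = "\<lambda>s. V s \<bullet> plane_normal j s"])
    show "isCont (\<lambda>s. V s \<bullet> plane_normal j s) (real n)"
      using assms(1) plane_normal_has_derivative
      by (intro continuous_intros) (auto intro: has_vector_derivative_continuous)
    fix s assume s: "real j < s" "s < real j + 1" and "bump_deriv j s \<noteq> 0"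
    then show "V s \<bullet> plane_normal j s = 0"
      using orthogonal[OF s] assms(2) by (simp add: tangent_deriv_on_piece)
  qed (use assms(3) in auto)
  then show ?thesis
    by (simp add: plane_normal_at_rest bump_at_integer inner_axis)
qed

lemma axis_aligned_at_knots:
  assumes "continuous_on {0<..<4} V"
    and "\<And>t. t \<in> {0<..<4} \<Longrightarrow> V t \<bullet> tangent t = 0" "\<And>t. t \<in> {0<..<4} \<Longrightarrow> V t \<bullet> tangent_deriv t = 0"
  shows "\<forall>i. i \<noteq> 4 \<longrightarrow> V 1 $ i = 0" "\<forall>i. i \<noteq> 2 \<longrightarrow> V 2 $ i = 0" "\<forall>i. i \<noteq> 3 \<longrightarrow> V 3 $ i = 0"
proof -
  have rotation_axis: "V (real n) $ rotation_axis j = 0" if "j < 4" "n = j \<or> n = j + 1" "0 < n" "n < 4"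
    for n j
    by (rule knot_nth_eq_0_if_orthogonal_to_tangent_deriv)
      (use that assms(1,3) in \<open>auto simp: continuous_on_eq_continuous_at\<close>)
  have first: "V (real n) $ 1 = 0" if "0 < n" "n < 4" for n
    using that assms(2)[of "real n"] tangent_at_integer[of n] by (simp add: inner_axis)
  show "\<forall>i. i \<noteq> 4 \<longrightarrow> V 1 $ i = 0" "\<forall>i. i \<noteq> 2 \<longrightarrow> V 2 $ i = 0" "\<forall>i. i \<noteq> 3 \<longrightarrow> V 3 $ i = 0"
    using rotation_axis[of 0 1] rotation_axis[of 1 1] rotation_axis[of 1 2] rotation_axis[of 2 2]
      rotation_axis[of 2 3] rotation_axis[of 3 3] first[of 1] first[of 2] first[of 3]
    by (simp_all add: forall_4)
qed

lemma curve_not_admits_frame_type_D: "\<not> admits_frame_type {0<..<2} curve shape_D"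
proof
  assume D: "admits_frame_type {0<..<2} curve shape_D"
  have curve': "vector_derivative curve (at t) = tangent t" if "t \<in> {0<..<2}" for t
    using that by (simp add: vector_derivative_curve)
  obtain N :: "real \<Rightarrow> real^4" and \<kappa> where N: "continuous_on {0<..<2} N"
    and unit: "\<And>t. t \<in> {0<..<2} \<Longrightarrow> norm (N t) = 1"
    and orthogonal: "\<And>t. t \<in> {0<..<2} \<Longrightarrow> N t \<bullet> tangent t = 0"
    and parallel: "\<And>t. t \<in> {0<..<2} \<Longrightarrow> tangent_deriv t = \<kappa> t *\<^sub>R N t"
    by (rule admits_frame_type_D_normal[OF D open_greaterThanLessThan curve' tangent_has_derivative])
      (assumption | rule that)+
  have "isCont N 1"
    using N by (simp add: continuous_on_eq_continuous_at)
  have N1: "N 1 $ k = 0" if "k \<noteq> 1" "k \<noteq> rotation_axis j" "j < 2" for j k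
    by (rule nth_eq_0_if_parallel_to_tangent_deriv[where \<kappa> = \<kappa>, OF \<open>isCont N 1\<close>])
      (use that parallel in auto)
  then have "N 1 $ 3 = 0" "N 1 $ 4 = 0" "N 1 $ 2 = 0"
    using N1[of 3 0] N1[of 4 0] N1[of 2 1] by simp_all
  moreover have "N 1 $ 1 = 0"
    using orthogonal[of 1] tangent_at_integer[of 1] by (simp add: inner_axis)
  ultimately have "N 1 = 0"
    by (simp add: vec_eq_iff forall_4)
  with unit[of 1] show False
    by simp
qed

lemma curve_not_admits_frame_type_C: "\<not> admits_frame_type {0<..<4} curve shape_C"
proof
  assume C: "admits_frame_type {0<..<4} curve shape_C"
  have curve': "vector_derivative curve (at t) = tangent t" if "t \<in> {0<..<4}" for t
    using that by (simp add: vector_derivative_curve)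
  obtain N B :: "real \<Rightarrow> real^4" and \<kappa> where B: "continuous_on {0<..<4} B"
    and N': "\<And>t. t \<in> {0<..<4} \<Longrightarrow> (N has_vector_derivative - \<kappa> t *\<^sub>R tangent t) (at t)"
    and unit: "\<And>t. t \<in> {0<..<4} \<Longrightarrow> norm (N t) = 1" "\<And>t. t \<in> {0<..<4} \<Longrightarrow> norm (B t) = 1"
    and orthogonal: "\<And>t. t \<in> {0<..<4} \<Longrightarrow> N t \<bullet> B t = 0"
      "\<And>t. t \<in> {0<..<4} \<Longrightarrow> N t \<bullet> tangent t = 0" "\<And>t. t \<in> {0<..<4} \<Longrightarrow> B t \<bullet> tangent t = 0"
      "\<And>t. t \<in> {0<..<4} \<Longrightarrow> B t \<bullet> tangent_deriv t = 0"
    by (rule admits_frame_type_C_normals[OF C open_greaterThanLessThan curve' tangent_has_derivative])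
      (assumption | rule that)+
  note B_at_knots = axis_aligned_at_knots[OF B orthogonal(3) orthogonal(4)]
  have N_knot: "N (real n) $ m = 0" if "0 < n" "n < 4" "\<forall>i. i \<noteq> m \<longrightarrow> B (real n) $ i = 0" for n m
    by (rule nth_eq_0_if_orthogonal_to_axis_vector[of "B (real n)"]) (use that unit orthogonal(1) in auto)
  have "N 1 $ 4 = 0" "N 2 $ 2 = 0" "N 3 $ 3 = 0"
    using N_knot[of 1 4] N_knot[of 2 2] N_knot[of 3 3] B_at_knots by simp_all
  moreover have "N 2 $ 4 = N 1 $ 4"
    by (rule vec_nth_eq_if_derivative_nth_eq_0[OF _ N'])
      (auto intro!: tangent_nth_eq_0_on_piece[where j = 1])
  moreover have "N 3 $ 3 = N 2 $ 3"
    by (rule vec_nth_eq_if_derivative_nth_eq_0[OF _ N'])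
      (auto intro!: tangent_nth_eq_0_on_piece[where j = 2])
  moreover have "N 2 $ 1 = 0"
    using orthogonal(2)[of 2] tangent_at_integer[of 2] by (simp add: inner_axis)
  ultimately have "N 2 = 0"
    by (simp add: vec_eq_iff forall_4)
  with unit(1)[of 2] show False
    by simp
qed

theorem theorem1:
  shows "(\<exists>I \<gamma>. unit_speed_curve I \<gamma> \<and> admits_frame_type I \<gamma> shape_C \<and>
                 \<not> admits_frame_type I \<gamma> shape_D) \<and>
         (\<exists>I \<gamma>. unit_speed_curve I \<gamma> \<and> \<not> admits_frame_type I \<gamma> shape_C)"
  using unit_speed_curve_curve[of 2] unit_speed_curve_curve[of 4] curve_admits_frame_type_C
    curve_not_admits_frame_type_D curve_not_admits_frame_type_C
  by auto

end
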